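(* Let $\Phi\in\Gamma_0(\mathbb{E})$ be Legendre and let $C\subset \operatorname{int}(\operatorname{dom}\Phi)$ be compact. Then there exist $r>0$ and $\delta<\infty$ such that $$D_\Phi(x,y)\ \ge\ r\|x\|-\delta\qquad\text{for every } x\in\operatorname{dom}\Phi \text{ and every } y\in C.$$
   Context: $\mathbb{E}$ is a finite-dimensional Euclidean space with inner product $\langle\cdot,\cdot\rangle$ and norm $\|\cdot\|$; $\Gamma_0(\mathbb{E})$ is the set of proper, lower semicontinuous, convex functions $\mathbb{E}\to\mathbb{R}\cup\{+\infty\}$. A function $\Phi\in\Gamma_0(\mathbb{E})$ is Legendre if it is essentially smooth ($\operatorname{int}\operatorname{dom}\Phi\neq\emptyset$, $\Phi$ is differentiable on $\operatorname{int}\operatorname{dom}\Phi$, and $\|\nabla\Phi(z^\nu)\|\to\infty$ whenever $\operatorname{int}\operatorname{dom}\Phi\ni z^\nu\to z\in\operatorname{bdry}\operatorname{dom}\Phi$) and essentially strictly convex ($\Phi$ is strictly convex on every convex subset of $\operatorname{dom}\partial\Phi$). The Bregman distance generated by a Legendre $\Phi$ is $D_\Phi(z_1,z_2)=\Phi(z_1)-\Phi(z_2)-\langle\nabla\Phi(z_2),z_1-z_2\rangle$ if $z_1\in\operatorname{dom}\Phi$ and $z_2\in\operatorname{int}\operatorname{dom}\Phi$, and $D_\Phi(z_1,z_2)=+\infty$ otherwise. *)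

theory Defs
  imports "HOL-Analysis.Analysis" "HOL-Library.Extended_Real"
begin

definition edom :: "('a \<Rightarrow> ereal) \<Rightarrow> 'a set" where
  "edom f = {x. f x < \<infinity>}"

definition proper_fun :: "('a \<Rightarrow> ereal) \<Rightarrow> bool" where
  "proper_fun f \<longleftrightarrow> (\<forall>x. f x \<noteq> -\<infinity>) \<and> (\<exists>x. f x < \<infinity>)"

definition lsc_fun :: "('a::topological_space \<Rightarrow> ereal) \<Rightarrow> bool" where
  "lsc_fun f \<longleftrightarrow> (\<forall>x X. X \<longlonglongrightarrow> x \<longrightarrow> f x \<le> liminf (\<lambda>n. f (X n)))"

definition convex_efun :: "('a::real_vector \<Rightarrow> ereal) \<Rightarrow> bool" where
  "convex_efun f \<longleftrightarrow> (\<forall>x y t. 0 \<le> t \<and> t \<le> 1 \<longrightarrow>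
      f ((1 - t) *\<^sub>R x + t *\<^sub>R y) \<le> ereal (1 - t) * f x + ereal t * f y)"

definition Gamma0 :: "('a::euclidean_space \<Rightarrow> ereal) \<Rightarrow> bool" where
  "Gamma0 f \<longleftrightarrow> proper_fun f \<and> lsc_fun f \<and> convex_efun f"

text \<open>Gradient of the real-valued part at a point (meaningful where differentiable).\<close>
definition egrad :: "('a::euclidean_space \<Rightarrow> ereal) \<Rightarrow> 'a \<Rightarrow> 'a" where
  "egrad f z = (SOME g. ((\<lambda>u. real_of_ereal (f u)) has_derivative (\<lambda>h. g \<bullet> h)) (at z))"

definition essentially_smooth :: "('a::euclidean_space \<Rightarrow> ereal) \<Rightarrow> bool" where
  "essentially_smooth f \<longleftrightarrow>
     interior (edom f) \<noteq> {} \<and>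
     (\<forall>z\<in>interior (edom f). (\<lambda>u. real_of_ereal (f u)) differentiable (at z)) \<and>
     (\<forall>Z z. (\<forall>n. Z n \<in> interior (edom f)) \<longrightarrow> Z \<longlonglongrightarrow> z \<longrightarrow> z \<in> frontier (edom f) \<longrightarrow>
        filterlim (\<lambda>n. norm (egrad f (Z n))) at_top sequentially)"

definition subdiff :: "('a::euclidean_space \<Rightarrow> ereal) \<Rightarrow> 'a \<Rightarrow> 'a set" where
  "subdiff f x = (if f x < \<infinity> \<and> f x \<noteq> -\<infinity>
      then {g. \<forall>y. f x + ereal (g \<bullet> (y - x)) \<le> f y} else {})"

definition dom_subdiff :: "('a::euclidean_space \<Rightarrow> ereal) \<Rightarrow> 'a set" where
  "dom_subdiff f = {x. subdiff f x \<noteq> {}}"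

definition strictly_convex_on_set :: "('a::real_vector \<Rightarrow> ereal) \<Rightarrow> 'a set \<Rightarrow> bool" where
  "strictly_convex_on_set f S \<longleftrightarrow> (\<forall>x\<in>S. \<forall>y\<in>S. \<forall>t. x \<noteq> y \<and> 0 < t \<and> t < 1 \<longrightarrow>
      f ((1 - t) *\<^sub>R x + t *\<^sub>R y) < ereal (1 - t) * f x + ereal t * f y)"

definition essentially_strictly_convex :: "('a::euclidean_space \<Rightarrow> ereal) \<Rightarrow> bool" where
  "essentially_strictly_convex f \<longleftrightarrow>
     (\<forall>S. convex S \<and> S \<subseteq> dom_subdiff f \<longrightarrow> strictly_convex_on_set f S)"

definition legendre :: "('a::euclidean_space \<Rightarrow> ereal) \<Rightarrow> bool" where
  "legendre f \<longleftrightarrow> Gamma0 f \<and> essentially_smooth f \<and> essentially_strictly_convex f"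

definition bregman :: "('a::euclidean_space \<Rightarrow> ereal) \<Rightarrow> 'a \<Rightarrow> 'a \<Rightarrow> ereal" where
  "bregman f x y = (if x \<in> edom f \<and> y \<in> interior (edom f)
      then ereal (real_of_ereal (f x) - real_of_ereal (f y) - egrad f y \<bullet> (x - y))
      else \<infinity>)"

end

theory Submission
  imports Defs
begin

(* Choose \<rho> > 0 such that the closed \<rho>-neighbourhood of C lies in int dom \<Phi>. For y \<in> C and a unit
   vector u, the second difference \<Phi>(y + \<rho>u) - 2\<Phi>(y + \<rho>u/2) + \<Phi>(y) is positive by strict convexity
   on the interior and continuous in (y, u), hence at least some m > 0 on C \<times> sphere.
   For x = y + l u with l > \<rho>, convexity along the ray bounds \<nabla>\<Phi>(y)\<cdot>u above by the chord slope
   over [0, \<rho>/2] and the chord slope over [0, l] below by the one over [0, \<rho>]; together they give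
   D(x, y) \<ge> (l/\<rho>) m. So D(x, y) \<ge> (m/\<rho>)\<parallel>x - y\<parallel> - m for every x, and \<parallel>x - y\<parallel> \<ge> \<parallel>x\<parallel> - max\<^sub>C \<parallel>\<cdot>\<parallel>. *)

lemma convex_on_line:
  fixes f :: "'a::real_vector \<Rightarrow> real"
  assumes "convex_on S f"
  shows "convex_on {t. z + t *\<^sub>R v \<in> S} (\<lambda>t. f (z + t *\<^sub>R v))"
proof -
  have line: "(1 - \<mu>) *\<^sub>R (z + a *\<^sub>R v) + \<mu> *\<^sub>R (z + b *\<^sub>R v) = z + ((1 - \<mu>) * a + \<mu> * b) *\<^sub>R v"
    for \<mu> a b :: real
    by (simp add: algebra_simps)
  show ?thesis
  proof (rule convex_onI)
    show "convex {t. z + t *\<^sub>R v \<in> S}"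
      using convex_on_imp_convex[OF assms] by (simp add: convex_alt flip: line)
  qed (use convex_onD[OF assms] in \<open>auto simp flip: line\<close>)
qed

lemma convex_on_gradient_inequality:
  fixes f :: "'a::real_normed_vector \<Rightarrow> real"
  assumes f: "convex_on S f" and z: "z \<in> interior S" and x: "x \<in> S"
    and D: "(f has_derivative D) (at z)"
  shows "D (x - z) \<le> f x - f z"
proof -
  define A where "A = {t. z + t *\<^sub>R (x - z) \<in> S}"
  have "open ((\<lambda>t. z + t *\<^sub>R (x - z)) -` interior S)"
    by (intro open_vimage continuous_intros) auto
  moreover have "(\<lambda>t. z + t *\<^sub>R (x - z)) -` interior S \<subseteq> A"
    using interior_subset unfolding A_def by blast
  ultimately have "(\<lambda>t. z + t *\<^sub>R (x - z)) -` interior S \<subseteq> interior A"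
    by (intro interior_maximal)
  then have "0 \<in> interior A" using z by auto
  moreover have "1 \<in> A" using x unfolding A_def by simp
  moreover have "convex_on A (\<lambda>t. f (z + t *\<^sub>R (x - z)))"
    unfolding A_def using f by (rule convex_on_line)
  moreover have "((\<lambda>t. f (z + t *\<^sub>R (x - z))) has_field_derivative D (x - z)) (at 0 within A)"
  proof -
    have line: "((\<lambda>t. z + t *\<^sub>R (x - z)) has_derivative (\<lambda>t. t *\<^sub>R (x - z))) (at 0)"
      by (auto intro!: derivative_eq_intros)
    have "((\<lambda>t. f (z + t *\<^sub>R (x - z))) has_derivative (\<lambda>t. D (t *\<^sub>R (x - z)))) (at 0)"
      using has_derivative_compose[OF line, of f D] D by simp
    moreover have "D (t *\<^sub>R (x - z)) = D (x - z) * t" for t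
      using linear_scale[OF has_derivative_linear[OF D]] by simp
    ultimately have "((\<lambda>t. f (z + t *\<^sub>R (x - z))) has_derivative (\<lambda>t. D (x - z) * t)) (at 0)"
      by simp
    then show ?thesis
      unfolding has_field_derivative_def by (rule has_derivative_at_withinI)
  qed
  ultimately show ?thesis
    using convex_on_imp_above_tangent[of A _ 0 1] convex_connected convex_on_imp_convex by fastforce
qed

lemma convex_on_ray_second_difference:
  fixes f :: "'a::real_vector \<Rightarrow> real"
  assumes f: "convex_on S f" and y: "y \<in> S" "y + L *\<^sub>R u \<in> S"
    and \<rho>: "0 < \<rho>" "\<rho> \<le> L"
    and initial_slope: "(\<rho> / 2) * d \<le> f (y + (\<rho> / 2) *\<^sub>R u) - f y"
  shows "(L / \<rho>) * (f (y + \<rho> *\<^sub>R u) - 2 * f (y + (\<rho> / 2) *\<^sub>R u) + f y)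
           \<le> f (y + L *\<^sub>R u) - f y - L * d"
proof -
  have "y + \<rho> *\<^sub>R u = (1 - \<rho> / L) *\<^sub>R y + (\<rho> / L) *\<^sub>R (y + L *\<^sub>R u)"
    using \<rho> by (simp add: algebra_simps)
  then have "f (y + \<rho> *\<^sub>R u) \<le> (1 - \<rho> / L) * f y + (\<rho> / L) * f (y + L *\<^sub>R u)"
    using convex_onD[OF f, of "\<rho> / L" y "y + L *\<^sub>R u"] y \<rho> by simp
  then have chord: "(L / \<rho>) * (f (y + \<rho> *\<^sub>R u) - f y) \<le> f (y + L *\<^sub>R u) - f y"
    using \<rho> by (simp add: field_simps)
  have "L * ((\<rho> / 2) * d) \<le> L * (f (y + (\<rho> / 2) *\<^sub>R u) - f y)"
    using initial_slope \<rho> by (intro mult_left_mono) auto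
  then have tangent: "L * d \<le> (2 * L / \<rho>) * (f (y + (\<rho> / 2) *\<^sub>R u) - f y)"
    using \<rho> by (simp add: field_simps)
  have "(L / \<rho>) * (f (y + \<rho> *\<^sub>R u) - 2 * f (y + (\<rho> / 2) *\<^sub>R u) + f y)
      = (L / \<rho>) * (f (y + \<rho> *\<^sub>R u) - f y) - (2 * L / \<rho>) * (f (y + (\<rho> / 2) *\<^sub>R u) - f y)"
    using \<rho> by (simp add: field_simps)
  also have "\<dots> \<le> f (y + L *\<^sub>R u) - f y - L * d"
    using chord tangent by (rule diff_mono)
  finally show ?thesis .
qed

lemma continuous_on_compact_pos_imp_uniformly_pos:
  fixes g :: "'a::topological_space \<Rightarrow> real"
  assumes "compact S" "continuous_on S g" "\<And>p. p \<in> S \<Longrightarrow> 0 < g p"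
  shows "\<exists>m>0. \<forall>p\<in>S. m \<le> g p"
proof (cases "S = {}")
  case False
  then obtain p0 where "p0 \<in> S" "\<forall>p\<in>S. g p0 \<le> g p"
    using continuous_attains_inf assms by blast
  with assms(3) show ?thesis by blast
qed (use zero_less_one in blast)

lemma proper_fun_edom_eq_ereal:
  assumes "proper_fun \<Phi>" "x \<in> edom \<Phi>"
  shows "\<Phi> x = ereal (real_of_ereal (\<Phi> x))"
  using assms unfolding proper_fun_def edom_def by (cases "\<Phi> x") auto

lemma convex_efun_imp_convex_on_edom:
  assumes cvx: "convex_efun \<Phi>" and proper: "proper_fun \<Phi>"
  shows "convex_on (edom \<Phi>) (\<lambda>x. real_of_ereal (\<Phi> x))"
proof -
  let ?f = "\<lambda>x. real_of_ereal (\<Phi> x)"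
  have combination: "(1 - t) *\<^sub>R x + t *\<^sub>R y \<in> edom \<Phi> \<and>
      ?f ((1 - t) *\<^sub>R x + t *\<^sub>R y) \<le> (1 - t) * ?f x + t * ?f y"
    if "x \<in> edom \<Phi>" "y \<in> edom \<Phi>" "0 \<le> t" "t \<le> 1" for x y t
  proof -
    let ?z = "(1 - t) *\<^sub>R x + t *\<^sub>R y"
    have "\<Phi> ?z \<le> ereal (1 - t) * \<Phi> x + ereal t * \<Phi> y"
      using cvx that unfolding convex_efun_def by blast
    also have "\<dots> = ereal ((1 - t) * ?f x + t * ?f y)"
      using proper_fun_edom_eq_ereal[OF proper] that by (metis times_ereal.simps(1) plus_ereal.simps(1))
    finally show ?thesis
      using proper unfolding proper_fun_def edom_def by (cases "\<Phi> ?z") auto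
  qed
  show ?thesis
  proof (rule convex_onI)
    show "convex (edom \<Phi>)"
      unfolding convex_alt using combination by blast
  qed (use combination in auto)
qed

lemma legendre_convex_on_edom:
  assumes "legendre \<Phi>"
  shows "convex_on (edom \<Phi>) (\<lambda>x. real_of_ereal (\<Phi> x))"
  using assms convex_efun_imp_convex_on_edom unfolding legendre_def Gamma0_def by blast

lemma essentially_smooth_has_derivative_egrad:
  assumes "essentially_smooth \<Phi>" "z \<in> interior (edom \<Phi>)"
  shows "((\<lambda>u. real_of_ereal (\<Phi> u)) has_derivative (\<lambda>h. egrad \<Phi> z \<bullet> h)) (at z)"
proof -
  obtain D where D: "((\<lambda>u. real_of_ereal (\<Phi> u)) has_derivative D) (at z)"
    using assms unfolding essentially_smooth_def differentiable_def by blast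
  have "D h = adjoint D 1 \<bullet> h" for h
    using adjoint_clauses(2)[OF has_derivative_linear[OF D]] by simp
  then have "((\<lambda>u. real_of_ereal (\<Phi> u)) has_derivative (\<lambda>h. adjoint D 1 \<bullet> h)) (at z)"
    using D by (metis (no_types, lifting) ext)
  then show ?thesis
    unfolding egrad_def by (rule someI)
qed

lemma essentially_smooth_continuous_on_interior:
  assumes "essentially_smooth \<Phi>"
  shows "continuous_on (interior (edom \<Phi>)) (\<lambda>x. real_of_ereal (\<Phi> x))"
  using assms unfolding essentially_smooth_def
  by (meson continuous_at_imp_continuous_on differentiable_imp_continuous_within)

lemma legendre_gradient_inequality:
  assumes "legendre \<Phi>" "y \<in> interior (edom \<Phi>)" "x \<in> edom \<Phi>"
  shows "egrad \<Phi> y \<bullet> (x - y) \<le> real_of_ereal (\<Phi> x) - real_of_ereal (\<Phi> y)"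
  using assms convex_on_gradient_inequality[OF legendre_convex_on_edom]
    essentially_smooth_has_derivative_egrad
  unfolding legendre_def by blast

lemma legendre_egrad_in_subdiff:
  assumes L: "legendre \<Phi>" and y: "y \<in> interior (edom \<Phi>)"
  shows "egrad \<Phi> y \<in> subdiff \<Phi> y"
proof -
  have proper: "proper_fun \<Phi>" using L unfolding legendre_def Gamma0_def by blast
  have y_dom: "y \<in> edom \<Phi>" using y interior_subset by blast
  have "\<Phi> y + ereal (egrad \<Phi> y \<bullet> (x - y)) \<le> \<Phi> x" for x
  proof (cases "x \<in> edom \<Phi>")
    case True
    then show ?thesis
      using legendre_gradient_inequality[OF L y True]
        proper_fun_edom_eq_ereal[OF proper y_dom] proper_fun_edom_eq_ereal[OF proper True]
      by (metis ereal_less_eq(3) le_diff_eq plus_ereal.simps(1) add.commute)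
  qed (simp add: edom_def)
  moreover have "\<Phi> y < \<infinity>" "\<Phi> y \<noteq> -\<infinity>"
    using y_dom proper unfolding edom_def proper_fun_def by auto
  ultimately show ?thesis unfolding subdiff_def by simp
qed

lemma legendre_strictly_convex_on_interior:
  assumes L: "legendre \<Phi>"
  shows "strictly_convex_on_set \<Phi> (interior (edom \<Phi>))"
proof -
  have "convex (edom \<Phi>)"
    using legendre_convex_on_edom[OF L] by (rule convex_on_imp_convex)
  moreover have "interior (edom \<Phi>) \<subseteq> dom_subdiff \<Phi>"
    using legendre_egrad_in_subdiff[OF L] unfolding dom_subdiff_def by blast
  ultimately show ?thesis
    using L unfolding legendre_def essentially_strictly_convex_def by simp
qed

lemma legendre_midpoint_strict:
  assumes L: "legendre \<Phi>" and ab: "a \<in> interior (edom \<Phi>)" "b \<in> interior (edom \<Phi>)" "a \<noteq> b"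
  shows "real_of_ereal (\<Phi> (midpoint a b)) < (real_of_ereal (\<Phi> a) + real_of_ereal (\<Phi> b)) / 2"
proof -
  have proper: "proper_fun \<Phi>" using L unfolding legendre_def Gamma0_def by blast
  have "\<Phi> ((1 - 1/2) *\<^sub>R a + (1/2) *\<^sub>R b) < ereal (1 - 1/2) * \<Phi> a + ereal (1/2) * \<Phi> b"
    using legendre_strictly_convex_on_interior[OF L, unfolded strictly_convex_on_set_def,
        rule_format, of a b "1/2"] ab by simp
  then have "\<Phi> (midpoint a b) < ereal (1/2) * \<Phi> a + ereal (1/2) * \<Phi> b"
    by (simp add: midpoint_def scaleR_add_right)
  also have "\<dots> = ereal ((real_of_ereal (\<Phi> a) + real_of_ereal (\<Phi> b)) / 2)"
    using ab interior_subset
    by (subst proper_fun_edom_eq_ereal[OF proper, of a], blast,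
        subst proper_fun_edom_eq_ereal[OF proper, of b], blast) simp
  finally show ?thesis
    using proper unfolding proper_fun_def by (cases "\<Phi> (midpoint a b)") auto
qed

lemma legendre_uniform_second_difference:
  fixes \<Phi> :: "'a::euclidean_space \<Rightarrow> ereal"
  assumes L: "legendre \<Phi>" and C: "compact C" and \<rho>: "0 < \<rho>"
    and nbhd: "(\<Union>y\<in>C. cball y \<rho>) \<subseteq> interior (edom \<Phi>)"
  shows "\<exists>m>0. \<forall>y\<in>C. \<forall>u. norm u = 1 \<longrightarrow>
           m \<le> real_of_ereal (\<Phi> (y + \<rho> *\<^sub>R u)) - 2 * real_of_ereal (\<Phi> (y + (\<rho> / 2) *\<^sub>R u))
                + real_of_ereal (\<Phi> y)"
proof -
  let ?f = "\<lambda>x. real_of_ereal (\<Phi> x)"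
  let ?S = "C \<times> sphere (0::'a) 1"
  have in_nbhd: "y + c *\<^sub>R u \<in> interior (edom \<Phi>)" if "y \<in> C" "norm u = 1" "\<bar>c\<bar> \<le> \<rho>" for y u c
  proof -
    have "y + c *\<^sub>R u \<in> cball y \<rho>" using that by (simp add: dist_norm)
    then show ?thesis using nbhd that(1) by blast
  qed
  have cont: "continuous_on ?S (\<lambda>p. ?f (fst p + c *\<^sub>R snd p))" if "\<bar>c\<bar> \<le> \<rho>" for c
  proof (rule continuous_on_compose2[OF essentially_smooth_continuous_on_interior])
    show "essentially_smooth \<Phi>" using L unfolding legendre_def by blast
    show "continuous_on ?S (\<lambda>p. fst p + c *\<^sub>R snd p)" by (intro continuous_intros)
    show "(\<lambda>p. fst p + c *\<^sub>R snd p) ` ?S \<subseteq> interior (edom \<Phi>)" using in_nbhd that by auto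
  qed
  define g where "g p = ?f (fst p + \<rho> *\<^sub>R snd p) - 2 * ?f (fst p + (\<rho> / 2) *\<^sub>R snd p) + ?f (fst p)"
    for p
  have "continuous_on ?S g"
    unfolding g_def using cont[of \<rho>] cont[of "\<rho> / 2"] cont[of 0] \<rho> by (intro continuous_intros) auto
  moreover have "0 < g p" if "p \<in> ?S" for p
  proof -
    obtain y u where p: "p = (y, u)" and y: "y \<in> C" and u: "norm u = 1"
      using \<open>p \<in> ?S\<close> by (cases p) auto
    have "midpoint y (y + \<rho> *\<^sub>R u) = y + (\<rho> / 2) *\<^sub>R u"
      by (simp add: midpoint_def scaleR_add_right flip: scaleR_add_left)
    moreover have "y \<noteq> y + \<rho> *\<^sub>R u" using u \<rho> by auto
    ultimately show ?thesis
      using legendre_midpoint_strict[OF L, of y "y + \<rho> *\<^sub>R u"]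
        in_nbhd[OF y u, of 0] in_nbhd[OF y u, of \<rho>] \<rho> by (simp add: g_def p)
  qed
  moreover have "compact ?S" using C by (simp add: compact_Times)
  ultimately obtain m where "m > 0" "\<forall>p\<in>?S. m \<le> g p"
    using continuous_on_compact_pos_imp_uniformly_pos by blast
  then show ?thesis by (auto simp: g_def)
qed

lemma legendre_bregman_ge_dist:
  fixes \<Phi> :: "'a::euclidean_space \<Rightarrow> ereal"
  assumes L: "legendre \<Phi>" and y: "y \<in> interior (edom \<Phi>)" and x: "x \<in> edom \<Phi>"
    and \<rho>: "0 < \<rho>" and m: "0 \<le> m"
    and gap: "\<And>u. norm u = 1 \<Longrightarrow>
           m \<le> real_of_ereal (\<Phi> (y + \<rho> *\<^sub>R u)) - 2 * real_of_ereal (\<Phi> (y + (\<rho> / 2) *\<^sub>R u))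
                + real_of_ereal (\<Phi> y)"
  shows "ereal (m / \<rho> * dist x y - m) \<le> bregman \<Phi> x y"
proof -
  let ?f = "\<lambda>x. real_of_ereal (\<Phi> x)"
  let ?g = "egrad \<Phi> y"
  have "m / \<rho> * dist x y - m \<le> ?f x - ?f y - ?g \<bullet> (x - y)"
  proof (cases "dist x y \<le> \<rho>")
    case True
    have "m / \<rho> * dist x y \<le> m / \<rho> * \<rho>"
      using True m \<rho> by (intro mult_left_mono) auto
    then show ?thesis
      using legendre_gradient_inequality[OF L y x] \<rho> by simp
  next
    case False
    define l where "l = dist x y"
    define u where "u = (1 / l) *\<^sub>R (x - y)"
    have l: "\<rho> < l" using False unfolding l_def by simp
    have u: "norm u = 1" "x = y + l *\<^sub>R u"
      using l \<rho> unfolding u_def l_def by (auto simp: dist_norm)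
    have cvx: "convex_on (edom \<Phi>) ?f"
      using L by (rule legendre_convex_on_edom)
    have y_dom: "y \<in> edom \<Phi>" using y interior_subset by blast
    have "y + (\<rho> / 2) *\<^sub>R u = (1 - \<rho> / (2 * l)) *\<^sub>R y + (\<rho> / (2 * l)) *\<^sub>R x"
      using l \<rho> by (simp add: u(2) algebra_simps)
    then have half_dom: "y + (\<rho> / 2) *\<^sub>R u \<in> edom \<Phi>"
      using convex_onD[OF cvx] convex_on_imp_convex[OF cvx] x y_dom l \<rho>
      by (simp add: convex_alt)
    have "(\<rho> / 2) * (?g \<bullet> u) \<le> ?f (y + (\<rho> / 2) *\<^sub>R u) - ?f y"
      using legendre_gradient_inequality[OF L y half_dom] by simp
    from convex_on_ray_second_difference[OF cvx y_dom _ \<rho> _ this]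
    have "l / \<rho> * (?f (y + \<rho> *\<^sub>R u) - 2 * ?f (y + (\<rho> / 2) *\<^sub>R u) + ?f y)
        \<le> ?f x - ?f y - l * (?g \<bullet> u)"
      using x l u by simp
    moreover have "l / \<rho> * m \<le> l / \<rho> * (?f (y + \<rho> *\<^sub>R u) - 2 * ?f (y + (\<rho> / 2) *\<^sub>R u) + ?f y)"
      using gap[OF u(1)] l \<rho> by (intro mult_left_mono) auto
    moreover have "l * (?g \<bullet> u) = ?g \<bullet> (x - y)" by (simp add: u(2))
    ultimately show ?thesis
      using m \<rho> unfolding l_def by (simp add: mult.commute)
  qed
  then show ?thesis
    using x y unfolding bregman_def by simp
qed

theorem mainTheorem1:
  fixes \<Phi> :: "'a::euclidean_space \<Rightarrow> ereal" and C :: "'a set"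
  assumes "legendre \<Phi>"
    and "compact C" and "C \<subseteq> interior (edom \<Phi>)"
  shows "\<exists>r \<delta>::real. r > 0 \<and>
           (\<forall>x\<in>edom \<Phi>. \<forall>y\<in>C. bregman \<Phi> x y \<ge> ereal (r * norm x - \<delta>))"
proof -
  obtain \<rho> where \<rho>: "0 < \<rho>" and nbhd: "(\<Union>y\<in>C. cball y \<rho>) \<subseteq> interior (edom \<Phi>)"
    using compact_subset_open_imp_cball_epsilon_subset[OF assms(2) _ assms(3)] by auto
  obtain M where M: "\<forall>y\<in>C. norm y \<le> M"
    using compact_imp_bounded[OF assms(2)] unfolding bounded_iff by blast
  obtain m where m: "0 < m" and gap: "\<forall>y\<in>C. \<forall>u. norm u = 1 \<longrightarrow>
      m \<le> real_of_ereal (\<Phi> (y + \<rho> *\<^sub>R u)) - 2 * real_of_ereal (\<Phi> (y + (\<rho> / 2) *\<^sub>R u))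
           + real_of_ereal (\<Phi> y)"
    using legendre_uniform_second_difference[OF assms(1,2) \<rho> nbhd] by blast
  have "ereal (m / \<rho> * norm x - (m / \<rho> * M + m)) \<le> bregman \<Phi> x y"
    if x: "x \<in> edom \<Phi>" and y: "y \<in> C" for x y
  proof -
    have "norm x \<le> dist x y + M"
      using M y norm_triangle_sub[of x y] by (force simp: dist_norm)
    then have "m / \<rho> * norm x \<le> m / \<rho> * (dist x y + M)"
      using m \<rho> by (intro mult_left_mono) auto
    then have "ereal (m / \<rho> * norm x - (m / \<rho> * M + m)) \<le> ereal (m / \<rho> * dist x y - m)"
      by (simp add: distrib_left)
    also have "\<dots> \<le> bregman \<Phi> x y"
      using legendre_bregman_ge_dist[OF assms(1) _ x \<rho>] assms(3) y m gap by auto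
    finally show ?thesis .
  qed
  then show ?thesis
    using m \<rho> by (intro exI[of _ "m / \<rho>"] exI[of _ "m / \<rho> * M + m"]) auto
qed

end
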